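(* Let $(X,d)$ be a separable complete metric space, $(\Omega,\mathsf{F},\mathbb{P})$ a probability space, and $\mathcal{F}$ a sub-$\sigma$-algebra of $\mathsf{F}$. Let $\phi:X\times X\to[0,\infty)$ be a Carath\'eodory distance and let $S\subseteq X$ be a non-empty Borel set. Then for every $\mathcal{F}$-measurable $X$-valued random variable $x$ and every $\varepsilon>0$ there exists an $\mathcal{F}$-measurable $X$-valued random variable $s$ such that almost surely $s\in S$ and $\phi(s,x)\le\mathrm{dist}^\phi_S(x)+\varepsilon$.
   Context: A Carath\'eodory distance is a function $\phi:X\times X\to[0,\infty)$ continuous in its left argument and Borel measurable in its right argument. $\mathrm{dist}^\phi_S(x):=\inf_{s\in S}\phi(s,x)$. No completeness of $(\Omega,\mathcal{F},\mathbb{P})$ is assumed. *)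

theory Defs
  imports "HOL-Probability.Probability"
begin

definition caratheodory_distance :: "('a::topological_space \<Rightarrow> 'a \<Rightarrow> real) \<Rightarrow> bool" where
  "caratheodory_distance \<phi> \<longleftrightarrow>
     (\<forall>s y. 0 \<le> \<phi> s y) \<and>
     (\<forall>y. continuous_on UNIV (\<lambda>s. \<phi> s y)) \<and>
     (\<forall>s. (\<lambda>y. \<phi> s y) \<in> borel_measurable borel)"

definition dist_phi :: "('a \<Rightarrow> 'a \<Rightarrow> real) \<Rightarrow> 'a set \<Rightarrow> 'a \<Rightarrow> real" where
  "dist_phi \<phi> S x = (INF s\<in>S. \<phi> s x)"

end

theory Submission
  imports Defs
begin

text \<open>Continuity of \<open>\<phi>\<close> in its left argument lets the infimum over \<open>S\<close> be taken over a
  countable dense subset \<open>D\<close> of \<open>S\<close>. This makes \<open>dist_phi \<phi> S\<close> Borel, so each event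
  \<open>\<phi> d x \<le> dist_phi \<phi> S x + \<epsilon>\<close> is \<open>\<F>\<close>-measurable, and choosing the first \<open>d\<close>
  in an enumeration of \<open>D\<close> for which it occurs is an \<open>\<F>\<close>-measurable selection.
  The selection works at every \<open>\<omega>\<close>.\<close>

lemma countable_dense_subsetE:
  fixes S :: "'a::second_countable_topology set"
  obtains D where "countable D" "D \<subseteq> S" "S \<subseteq> closure D"
proof -
  obtain B :: "'a set set" where B: "countable B" "topological_basis B"
    using ex_countable_basis by blast
  define pick where "pick b = (SOME s. s \<in> b \<inter> S)" for b
  define D where "D = pick ` {b\<in>B. b \<inter> S \<noteq> {}}"
  have pick: "pick b \<in> b \<inter> S" if "b \<inter> S \<noteq> {}" for b
    unfolding pick_def by (rule someI_ex) (use that in blast)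
  have "s \<in> closure D" if "s \<in> S" for s
  proof (unfold closure_iff_nhds_not_empty, intro allI impI)
    fix U V assume "V \<subseteq> U" "open V" "s \<in> V"
    then obtain b where "b \<in> B" "s \<in> b" "b \<subseteq> V"
      using topological_basisE[OF B(2)] by blast
    with \<open>s \<in> S\<close> have "pick b \<in> D \<inter> V"
      unfolding D_def using pick[of b] by blast
    with \<open>V \<subseteq> U\<close> show "D \<inter> U \<noteq> {}" by blast
  qed
  moreover have "D \<subseteq> S" "countable D"
    unfolding D_def using pick B(1) by auto
  ultimately show thesis using that by blast
qed

lemma dist_phi_dense_subset:
  assumes cont: "continuous_on UNIV (\<lambda>s. \<phi> s y)"
    and bdd: "bdd_below ((\<lambda>s. \<phi> s y) ` S)"
    and "S \<noteq> {}" "D \<subseteq> S" "S \<subseteq> closure D"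
  shows "dist_phi \<phi> S y = (INF d\<in>D. \<phi> d y)"
proof (rule antisym)
  have "D \<noteq> {}" using \<open>S \<noteq> {}\<close> \<open>S \<subseteq> closure D\<close> by auto
  then show "dist_phi \<phi> S y \<le> (INF d\<in>D. \<phi> d y)"
    unfolding dist_phi_def using bdd \<open>D \<subseteq> S\<close> by (rule cINF_superset_mono) simp
next
  have bdd_D: "bdd_below ((\<lambda>s. \<phi> s y) ` D)"
    using bdd \<open>D \<subseteq> S\<close> by (meson bdd_below_mono image_mono)
  have "closed {s. (INF d\<in>D. \<phi> d y) \<le> \<phi> s y}"
    using cont by (intro closed_Collect_le continuous_on_const) auto
  moreover have "D \<subseteq> {s. (INF d\<in>D. \<phi> d y) \<le> \<phi> s y}"
    using bdd_D by (auto intro: cINF_lower)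
  ultimately have "closure D \<subseteq> {s. (INF d\<in>D. \<phi> d y) \<le> \<phi> s y}"
    by (rule closure_minimal[rotated])
  then show "(INF d\<in>D. \<phi> d y) \<le> dist_phi \<phi> S y"
    unfolding dist_phi_def using \<open>S \<noteq> {}\<close> \<open>S \<subseteq> closure D\<close> by (intro cINF_greatest) auto
qed

lemma dist_phi_countable_INF:
  fixes \<phi> :: "'a::second_countable_topology \<Rightarrow> 'a \<Rightarrow> real"
  assumes "caratheodory_distance \<phi>" "S \<noteq> {}"
  obtains D where "countable D" "D \<noteq> {}" "D \<subseteq> S"
    "\<And>y. dist_phi \<phi> S y = (INF d\<in>D. \<phi> d y)"
proof -
  obtain D where D: "countable D" "D \<subseteq> S" "S \<subseteq> closure D"
    using countable_dense_subsetE by blast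
  have cont: "continuous_on UNIV (\<lambda>s. \<phi> s y)" for y
    using assms(1) unfolding caratheodory_distance_def by blast
  have bdd: "bdd_below ((\<lambda>s. \<phi> s y) ` S)" for y
    using assms(1) unfolding caratheodory_distance_def by (auto intro!: bdd_belowI[of _ 0])
  have "D \<noteq> {}" using D \<open>S \<noteq> {}\<close> by auto
  show thesis
    by (rule that[OF D(1) \<open>D \<noteq> {}\<close> D(2) dist_phi_dense_subset[OF cont bdd \<open>S \<noteq> {}\<close> D(2,3)]])
qed

lemma borel_measurable_dist_phi:
  fixes \<phi> :: "'a::second_countable_topology \<Rightarrow> 'a \<Rightarrow> real"
  assumes "caratheodory_distance \<phi>" "S \<noteq> {}"
  shows "dist_phi \<phi> S \<in> borel_measurable borel"
proof -
  obtain D where "countable D" and eq: "\<And>y. dist_phi \<phi> S y = (INF d\<in>D. \<phi> d y)"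
    using dist_phi_countable_INF[OF assms] by metis
  have "\<phi> d \<in> borel_measurable borel" for d
    using assms(1) unfolding caratheodory_distance_def by blast
  with \<open>countable D\<close> have "(\<lambda>y. INF d\<in>D. \<phi> d y) \<in> borel_measurable borel"
    by (rule borel_measurable_cINF_real)
  moreover have "dist_phi \<phi> S = (\<lambda>y. INF d\<in>D. \<phi> d y)"
    using eq by (rule ext)
  ultimately show ?thesis by simp
qed

lemma measurable_selection_countableE:
  assumes "countable D" "D \<noteq> {}" "D \<subseteq> space N"
    and pred: "\<And>d. d \<in> D \<Longrightarrow> Measurable.pred M (P d)"
    and ex: "\<And>\<omega>. \<omega> \<in> space M \<Longrightarrow> \<exists>d\<in>D. P d \<omega>"
  obtains s where "s \<in> M \<rightarrow>\<^sub>M N" "\<And>\<omega>. \<omega> \<in> space M \<Longrightarrow> s \<omega> \<in> D \<and> P (s \<omega>) \<omega>"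
proof -
  define f where "f = from_nat_into D"
  have f: "f n \<in> D" for n
    unfolding f_def using \<open>D \<noteq> {}\<close> by (rule from_nat_into)
  define first where "first \<omega> = (LEAST n. P (f n) \<omega>)" for \<omega>
  have "first \<in> M \<rightarrow>\<^sub>M count_space UNIV"
    unfolding first_def using pred f by (intro measurable_Least) auto
  moreover have "f \<in> count_space UNIV \<rightarrow>\<^sub>M N"
    using f \<open>D \<subseteq> space N\<close> by (auto simp: measurable_count_space_eq1)
  ultimately have "(\<lambda>\<omega>. f (first \<omega>)) \<in> M \<rightarrow>\<^sub>M N"
    by (rule measurable_compose)
  moreover have "P (f (first \<omega>)) \<omega>" if \<omega>: "\<omega> \<in> space M" for \<omega>
  proof -
    obtain d where "d \<in> D" "P d \<omega>" using ex[OF \<omega>] by blast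
    then have "P (f (to_nat_on D d)) \<omega>"
      unfolding f_def using \<open>countable D\<close> by simp
    then show ?thesis unfolding first_def by (rule LeastI)
  qed
  ultimately show thesis using that f by blast
qed

theorem lemma2p10:
  fixes M F :: "'w measure"
    and \<phi> :: "'a::polish_space \<Rightarrow> 'a \<Rightarrow> real"
    and S :: "'a set"
    and x :: "'w \<Rightarrow> 'a"
    and \<epsilon> :: real
  assumes "prob_space M"
    and "subalgebra M F"
    and "caratheodory_distance \<phi>"
    and "S \<in> sets borel" and "S \<noteq> {}"
    and "x \<in> F \<rightarrow>\<^sub>M borel"
    and "\<epsilon> > 0"
  shows "\<exists>s \<in> F \<rightarrow>\<^sub>M borel.
           AE \<omega> in M. s \<omega> \<in> S \<and> \<phi> (s \<omega>) (x \<omega>) \<le> dist_phi \<phi> S (x \<omega>) + \<epsilon>"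
proof -
  obtain D where D: "countable D" "D \<noteq> {}" "D \<subseteq> S"
    and eq: "\<And>y. dist_phi \<phi> S y = (INF d\<in>D. \<phi> d y)"
    using dist_phi_countable_INF[OF assms(3,5)] by metis
  have [measurable]: "x \<in> borel_measurable F" "dist_phi \<phi> S \<in> borel_measurable borel"
    "\<And>d. \<phi> d \<in> borel_measurable borel"
    using assms(6) borel_measurable_dist_phi[OF assms(3,5)] assms(3)
    by (auto simp: caratheodory_distance_def)
  have near: "\<exists>d\<in>D. \<phi> d y \<le> dist_phi \<phi> S y + \<epsilon>" for y
  proof -
    have "bdd_below ((\<lambda>d. \<phi> d y) ` D)"
      using assms(3) by (auto simp: caratheodory_distance_def intro: bdd_belowI[of _ 0])
    then show ?thesis
      using cINF_less_iff[OF \<open>D \<noteq> {}\<close>] \<open>\<epsilon> > 0\<close> unfolding eq by (meson less_add_same_cancel1 less_le)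
  qed
  have "Measurable.pred F (\<lambda>\<omega>. \<phi> d (x \<omega>) \<le> dist_phi \<phi> S (x \<omega>) + \<epsilon>)" for d
    by measurable
  moreover have "D \<subseteq> space borel" by simp
  ultimately obtain s where s: "s \<in> F \<rightarrow>\<^sub>M borel"
    "\<And>\<omega>. \<omega> \<in> space F \<Longrightarrow> s \<omega> \<in> D \<and> \<phi> (s \<omega>) (x \<omega>) \<le> dist_phi \<phi> S (x \<omega>) + \<epsilon>"
    using measurable_selection_countableE[OF D(1,2), where M = F and N = borel
        and P = "\<lambda>d \<omega>. \<phi> d (x \<omega>) \<le> dist_phi \<phi> S (x \<omega>) + \<epsilon>"] near by blast
  have "space F = space M" using assms(2) by (simp add: subalgebra_def)
  then have "AE \<omega> in M. s \<omega> \<in> S \<and> \<phi> (s \<omega>) (x \<omega>) \<le> dist_phi \<phi> S (x \<omega>) + \<epsilon>"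
    using s(2) \<open>D \<subseteq> S\<close> by (intro AE_I2) auto
  then show ?thesis using s(1) by (rule bexI)
qed

end
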